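(* Let $G=GL_n(\mathbb C)$, $\mathfrak g=\mathfrak{gl}_n(\mathbb C)$, $v_0\in\mathbb C^n$ nonzero, $P=\{g\in G:gv_0=v_0\}$ with Lie algebra $\mathfrak p=\{A\in\mathfrak g:Av_0=0\}$, and let $\mathfrak p^\perp$ be the orthogonal of $\mathfrak p$ for the form $(A,B)\mapsto\mathrm{trace}(AB)$. Let $X$ be a regular nilpotent element of $\mathfrak g$ (a single Jordan block). If the orbit $P.X$ (under conjugation) is not open dense in $G.X$, then there exists a semisimple $Y\in\mathfrak g$ not in the center of $\mathfrak g$ such that $[X,Y]\in\mathfrak p^\perp$. *)

theory Defs
  imports "HOL-Analysis.Analysis"
begin

type_synonym 'n cmat = "complex^'n^'n"

definition conj_act :: "'n::finite cmat \<Rightarrow> 'n cmat \<Rightarrow> 'n cmat" where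
  "conj_act g X = g ** X ** matrix_inv g"

definition GL :: "'n::finite cmat set" where
  "GL = {g. invertible g}"

definition stab :: "complex^'n \<Rightarrow> 'n::finite cmat set" where
  "stab v0 = {g. invertible g \<and> g *v v0 = v0}"

definition orbit :: "'n::finite cmat set \<Rightarrow> 'n cmat \<Rightarrow> 'n cmat set" where
  "orbit H X = (\<lambda>g. conj_act g X) ` H"

definition lie_p :: "complex^'n \<Rightarrow> 'n::finite cmat set" where
  "lie_p v0 = {A. A *v v0 = 0}"

definition trace_perp :: "'n::finite cmat set \<Rightarrow> 'n cmat set" where
  "trace_perp S = {B. \<forall>A\<in>S. trace (A ** B) = 0}"

definition bracket :: "'n::finite cmat \<Rightarrow> 'n cmat \<Rightarrow> 'n cmat" where
  "bracket X Y = X ** Y - Y ** X"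

definition gl_center :: "'n::finite cmat set" where
  "gl_center = {Z. \<forall>A. bracket A Z = 0}"

definition semisimple_mat :: "'n::finite cmat \<Rightarrow> bool" where
  "semisimple_mat Y \<longleftrightarrow> (\<exists>(S::'n cmat) (D::'n cmat). invertible S \<and> (\<forall>i j. i \<noteq> j \<longrightarrow> D $ i $ j = 0)
      \<and> Y = S ** D ** matrix_inv S)"

text \<open>Regular nilpotent: conjugate to a single nilpotent Jordan block, where the
  index type is ordered via a bijection sigma onto {0..<n}.\<close>
definition regular_nilpotent :: "'n::finite cmat \<Rightarrow> bool" where
  "regular_nilpotent X \<longleftrightarrow> (\<exists>(S::'n cmat) \<sigma>. invertible S \<and> bij_betw \<sigma> (UNIV::'n set) {0..<CARD('n)}
      \<and> matrix_inv S ** X ** S = (\<chi> i j. if \<sigma> j = Suc (\<sigma> i) then 1 else 0))"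

end

theory Submission
  imports Defs
begin

text \<open>Write X = S J S^-1 with J the nilpotent Jordan block, and call v0 cyclic for N if the
  Krylov matrix (v0, N v0, ..., N^(n-1) v0) is invertible.

  If v0 is cyclic for X, then P.X consists exactly of those N in G.X for which v0 is cyclic:
  when the Krylov matrices of X at v0 and at g^-1 v0 are both invertible, their quotient commutes
  with X and maps v0 to g^-1 v0. This set is relatively open in G.X, and it is dense because
  composing g with a transvection arbitrarily close to the identity makes g^-1 v0 cyclic.

  If v0 is not cyclic, it is J^p applied to a cyclic vector for some p >= 1. In the resulting
  Krylov basis f_0, ..., f_(n-1), X is the shift f_k |-> f_(k+1) and v0 = f_p. The projection Y
  onto the span of the f_k with k >= p is semisimple and not central, and [X, Y] = -v0 f*_(p-1)
  has rank one with image spanned by v0, so trace (A [X, Y]) = -f*_(p-1) (A v0) = 0 whenever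
  A v0 = 0.\<close>

lemma matrix_inv_right:
  fixes A :: "'a::semiring_1^'n^'n"
  assumes "invertible A"
  shows "A ** matrix_inv A = mat 1"
  using assms unfolding invertible_def matrix_inv_def by (rule someI_ex[THEN conjunct1])

lemma matrix_inv_left:
  fixes A :: "'a::semiring_1^'n^'n"
  assumes "invertible A"
  shows "matrix_inv A ** A = mat 1"
  using assms unfolding invertible_def matrix_inv_def by (rule someI_ex[THEN conjunct2])

lemma matrix_inv_unique:
  fixes A :: "'a::semiring_1^'n^'n"
  assumes "A ** B = mat 1" "B ** A = mat 1"
  shows "matrix_inv A = B"
proof -
  have "invertible A" using assms unfolding invertible_def by blast
  then have "matrix_inv A = (matrix_inv A ** A) ** B" by (simp add: assms(1) matrix_mul_assoc[symmetric])
  then show ?thesis by (simp add: matrix_inv_left \<open>invertible A\<close>)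
qed

lemma matrix_inv_cancel_right:
  fixes A S :: "'a::semiring_1^'n^'n"
  assumes "invertible S"
  shows "A ** matrix_inv S ** S = A" "A ** S ** matrix_inv S = A"
  by (simp_all add: matrix_mul_assoc[symmetric] matrix_inv_left matrix_inv_right assms)

lemma invertible_matrix_inv:
  fixes A :: "'a::semiring_1^'n^'n"
  assumes "invertible A"
  shows "invertible (matrix_inv A)"
  using matrix_inv_left[OF assms] matrix_inv_right[OF assms] unfolding invertible_def by blast

lemma matrix_inv_mult:
  fixes A B :: "'a::semiring_1^'n^'n"
  assumes "invertible A" "invertible B"
  shows "matrix_inv (A ** B) = matrix_inv B ** matrix_inv A"
proof (rule matrix_inv_unique)
  have "A ** B ** (matrix_inv B ** matrix_inv A) = A ** (B ** matrix_inv B) ** matrix_inv A"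
    by (simp add: matrix_mul_assoc)
  then show "A ** B ** (matrix_inv B ** matrix_inv A) = mat 1"
    by (simp add: assms matrix_inv_right)
  have "matrix_inv B ** matrix_inv A ** (A ** B) = matrix_inv B ** (matrix_inv A ** A) ** B"
    by (simp add: matrix_mul_assoc)
  then show "matrix_inv B ** matrix_inv A ** (A ** B) = mat 1"
    by (simp add: assms matrix_inv_left)
qed

lemma matrix_mul_inverse_pair:
  fixes a b :: "'a::semiring_1^'n^'n"
  assumes "a ** a' = mat 1" "b ** b' = mat 1"
  shows "(a ** b) ** (b' ** a') = mat 1"
proof -
  have "(a ** b) ** (b' ** a') = a ** (b ** b') ** a'" by (simp add: matrix_mul_assoc)
  then show ?thesis by (simp add: assms)
qed

lemma matrix_diff_ldistrib: "(A::'a::ring_1^'n^'m) ** (B - C) = A ** B - A ** C"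
  by (simp add: vec_eq_iff matrix_matrix_mult_def sum_subtractf algebra_simps)

lemma matrix_diff_rdistrib: "((B::'a::ring_1^'n^'m) - C) ** A = B ** A - C ** A"
  by (simp add: vec_eq_iff matrix_matrix_mult_def sum_subtractf algebra_simps)

lemma matrix_add_rdistrib: "((B::'a::semiring_1^'n^'m) + C) ** A = B ** A + C ** A"
  by (simp add: vec_eq_iff matrix_matrix_mult_def sum.distrib algebra_simps)

lemma matrix_vector_mult_axis_nth: "((M::'a::comm_semiring_1^'n^'m) *v axis j 1) $ i = M $ i $ j"
  by (simp add: matrix_vector_mult_def axis_def if_distrib cong: if_cong)

lemma tendsto_matrix_mult:
  fixes f g :: "'a \<Rightarrow> 'b::real_normed_algebra_1^'n^'n"
  assumes "(f \<longlongrightarrow> A) F" "(g \<longlongrightarrow> B) F"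
  shows "((\<lambda>x. f x ** g x) \<longlongrightarrow> A ** B) F"
  unfolding matrix_matrix_mult_def by (intro tendsto_intros assms)

lemma conj_act_eq:
  assumes "g ** g' = mat 1" "g' ** g = mat 1"
  shows "conj_act g X = g ** X ** g'"
  by (simp add: conj_act_def matrix_inv_unique[OF assms])

lemma orbit_GL_memI:
  assumes "g ** g' = mat 1" "g' ** g = mat 1"
  shows "g ** X ** g' \<in> orbit GL X"
proof -
  have "invertible g" using assms unfolding invertible_def by blast
  then show ?thesis
    unfolding orbit_def GL_def by (intro image_eqI[where x = g]) (simp_all add: conj_act_eq[OF assms])
qed

lemma nonzero_coordinate_near_identity:
  fixes u :: "'a::real_normed_field^'n"
  assumes "u \<noteq> 0"
  obtains H H' :: "nat \<Rightarrow> 'a^'n^'n"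
  where "\<And>k. H k ** H' k = mat 1" "\<And>k. H' k ** H k = mat 1"
    and "H \<longlonglongrightarrow> mat 1" "H' \<longlonglongrightarrow> mat 1" and "\<And>k. (H k *v u) $ i \<noteq> 0"
proof (cases "u $ i = 0")
  case False
  show ?thesis by (rule that[of "\<lambda>_. mat 1" "\<lambda>_. mat 1"]) (use False in simp_all)
next
  case True
  obtain j where j: "u $ j \<noteq> 0" using assms by (auto simp: vec_eq_iff)
  with True have "i \<noteq> j" by auto
  define E :: "'a^'n^'n" where "E = (\<chi> a b. if a = i \<and> b = j then 1 / u $ j else 0)"
  have EE: "E ** E = 0"
    unfolding E_def matrix_matrix_mult_def using \<open>i \<noteq> j\<close>
    by (simp add: vec_eq_iff if_distrib[of "\<lambda>x. x * _"] cong: if_cong)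
  define r :: "nat \<Rightarrow> real" where "r k = inverse (real (Suc k))" for k
  define H where "H k = mat 1 + r k *\<^sub>R E" for k
  define H' where "H' k = mat 1 - r k *\<^sub>R E" for k
  have Eu: "(E *v u) $ i = 1"
    unfolding E_def matrix_vector_mult_def using j by (simp add: if_distrib[of "\<lambda>x. x * _"] cong: if_cong)
  show ?thesis
  proof (rule that)
    show "H k ** H' k = mat 1" "H' k ** H k = mat 1" for k
      by (simp_all add: H_def H'_def matrix_diff_ldistrib matrix_add_ldistrib matrix_add_rdistrib
          matrix_diff_rdistrib matrix_scalar_ac scalar_matrix_assoc[symmetric] EE)
    have "(\<lambda>k. r k *\<^sub>R E) \<longlonglongrightarrow> 0"
      using tendsto_scaleR[OF LIMSEQ_inverse_real_of_nat tendsto_const[of E]] by (simp add: r_def)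
    then show "H \<longlonglongrightarrow> mat 1" "H' \<longlonglongrightarrow> mat 1"
      unfolding H_def H'_def using tendsto_add[OF tendsto_const] tendsto_diff[OF tendsto_const] by force+
    show "(H k *v u) $ i \<noteq> 0" for k
    proof -
      have "(r k *\<^sub>R E *v u) $ i = r k *\<^sub>R (E *v u) $ i"
        by (simp add: matrix_vector_mult_def scaleR_sum_right)
      then have "(H k *v u) $ i = r k *\<^sub>R (E *v u) $ i"
        using True by (simp add: H_def matrix_vector_mult_add_rdistrib)
      then show ?thesis using Eu by (simp add: r_def)
    qed
  qed
qed

definition matpow_vec :: "'a::semiring_1^'n^'n \<Rightarrow> nat \<Rightarrow> 'a^'n \<Rightarrow> 'a^'n" where
  "matpow_vec N k w = ((*v) N ^^ k) w"

definition krylov :: "('n::finite \<Rightarrow> nat) \<Rightarrow> 'a::semiring_1^'n^'n \<Rightarrow> 'a^'n \<Rightarrow> 'a^'n^'n" where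
  "krylov s N w = (\<chi> i j. matpow_vec N (s j) w $ i)"

definition jordan_block :: "('n::finite \<Rightarrow> nat) \<Rightarrow> 'a::{zero,one}^'n^'n" where
  "jordan_block s = (\<chi> i j. if s j = Suc (s i) then 1 else 0)"

definition tail_projection :: "('n::finite \<Rightarrow> nat) \<Rightarrow> nat \<Rightarrow> 'a::{zero,one}^'n^'n" where
  "tail_projection s p = (\<chi> i j. if i = j \<and> p \<le> s i then 1 else 0)"

lemma matpow_vec_0 [simp]: "matpow_vec N 0 w = w"
  by (simp add: matpow_vec_def)

lemma matpow_vec_Suc: "matpow_vec N (Suc k) w = N *v matpow_vec N k w"
  by (simp add: matpow_vec_def)

lemma matpow_vec_similar:
  assumes "g' ** g = mat 1"
  shows "matpow_vec (g ** N ** g') k (g *v w) = g *v matpow_vec N k w"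
proof (induction k)
  case (Suc k)
  have "matpow_vec (g ** N ** g') (Suc k) (g *v w) = g *v (N *v ((g' ** g) *v matpow_vec N k w))"
    by (simp add: matpow_vec_Suc Suc matrix_vector_mul_assoc matrix_mul_assoc)
  then show ?case by (simp add: assms matpow_vec_Suc)
qed simp

lemma krylov_similar:
  assumes "g' ** g = mat 1"
  shows "krylov s (g ** N ** g') (g *v w) = g ** krylov s N w"
  unfolding krylov_def matpow_vec_similar[OF assms]
  by (simp add: matrix_matrix_mult_def matrix_vector_mult_def vec_eq_iff)

lemma krylov_conj:
  assumes "g ** g' = mat 1" "g' ** g = mat 1"
  shows "krylov s (g ** N ** g') v = g ** krylov s N (g' *v v)"
  using krylov_similar[OF assms(2), of s N "g' *v v"] by (simp add: matrix_vector_mul_assoc assms(1))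

lemma krylov_mult_axis:
  fixes N :: "'a::comm_semiring_1^'n^'n"
  shows "krylov s N w *v axis j 1 = matpow_vec N (s j) w"
  unfolding vec_eq_iff matrix_vector_mult_axis_nth by (simp add: krylov_def)

lemma continuous_on_matpow_vec: "continuous_on UNIV (\<lambda>N::'a::real_normed_algebra_1^'n^'n. matpow_vec N k w)"
proof (induction k)
  case (Suc k)
  have "(\<lambda>N::'a^'n^'n. matpow_vec N (Suc k) w) = (\<lambda>N. \<chi> i. \<Sum>j\<in>UNIV. N $ i $ j * matpow_vec N k w $ j)"
    by (simp add: matpow_vec_Suc matrix_vector_mult_def)
  then show ?case
    by (simp only:) (intro continuous_intros continuous_on_component Suc continuous_on_id)
qed (simp add: continuous_on_const)

lemma open_krylov_invertible: "open {N::'a::real_normed_field^'n^'n. invertible (krylov s N w)}"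
proof -
  have "continuous_on UNIV (\<lambda>N::'a^'n^'n. det (krylov s N w))"
    unfolding det_def krylov_def vec_lambda_beta
    by (intro continuous_intros continuous_on_component continuous_on_matpow_vec)
  then show ?thesis
    using open_Collect_neq[OF _ continuous_on_const] by (simp add: invertible_det_nz)
qed

lemma intertwiner_inverse:
  fixes K :: "'a::semiring_1^'n^'n"
  assumes "X ** K = K ** Z" "invertible K"
  shows "matrix_inv K ** X = Z ** matrix_inv K"
proof -
  have "matrix_inv K ** X = matrix_inv K ** (X ** K) ** matrix_inv K"
    by (simp add: matrix_mul_assoc[symmetric] matrix_inv_right assms(2))
  then show ?thesis
    by (simp add: assms matrix_mul_assoc matrix_inv_left)
qed

lemma intertwiner_quotient_commutes:
  fixes K K' :: "'a::semiring_1^'n^'n"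
  assumes "X ** K = K ** Z" "X ** K' = K' ** Z" "invertible K"
  shows "(K' ** matrix_inv K) ** X = X ** (K' ** matrix_inv K)"
proof -
  have "(K' ** matrix_inv K) ** X = (K' ** Z) ** matrix_inv K"
    by (simp add: matrix_mul_assoc[symmetric] intertwiner_inverse[OF assms(1,3)])
  then show ?thesis by (simp add: assms(2)[symmetric] matrix_mul_assoc)
qed

lemma similar_single_row_in_trace_perp:
  fixes T F T' :: "complex^'n^'n"
  assumes "T *v axis c 1 = v0" and "\<And>i j. i \<noteq> c \<Longrightarrow> F $ i $ j = 0"
  shows "T ** F ** T' \<in> trace_perp (lie_p v0)"
  unfolding trace_perp_def lie_p_def
proof (intro CollectI ballI)
  fix A :: "complex^'n^'n"
  assume "A \<in> {A. A *v v0 = 0}"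
  then have "(A ** T) *v axis c 1 = 0"
    using assms(1) by (simp add: matrix_vector_mul_assoc[symmetric])
  then have "(A ** T) $ i $ c = 0" for i
    by (metis matrix_vector_mult_axis_nth zero_index)
  then have "(A ** T ** F) $ i $ j = 0" for i j
    unfolding matrix_matrix_mult_def[of "A ** T" F] vec_lambda_beta
    using assms(2) by (intro sum.neutral) (metis mult_zero_left mult_zero_right)
  then have "A ** T ** F = 0"
    by (simp add: vec_eq_iff)
  then have "A ** (T ** F ** T') = 0"
    by (simp add: matrix_mul_assoc)
  then show "trace (A ** (T ** F ** T')) = 0"
    by (simp add: trace_def)
qed

locale index_order =
  fixes s :: "'n::finite \<Rightarrow> nat"
  assumes bij_s: "bij_betw s UNIV {0..<CARD('n)}"
begin

definition idx :: "nat \<Rightarrow> 'n" where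
  "idx k = inv_into UNIV s k"

lemma s_less_card [simp]: "s i < CARD('n)"
  using bij_s by (auto simp: bij_betw_def)

lemma inj_s: "inj s"
  using bij_s by (auto simp: bij_betw_def)

lemma idx_s [simp]: "idx (s i) = i"
  using inj_s by (simp add: idx_def)

lemma s_idx [simp]: "k < CARD('n) \<Longrightarrow> s (idx k) = k"
  using bij_s unfolding idx_def bij_betw_def by (simp add: f_inv_into_f)

lemma s_eq_iff: "k < CARD('n) \<Longrightarrow> s j = k \<longleftrightarrow> j = idx k"
  by auto

lemma sum_if_s_eq:
  "(\<Sum>k\<in>UNIV. if s k = c then f k else 0) = (if c < CARD('n) then f (idx c) else (0::'a::comm_monoid_add))"
proof (cases "c < CARD('n)")
  case False
  then have "s k \<noteq> c" for k
    using s_less_card by (metis)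
  with False show ?thesis by simp
qed (simp add: s_eq_iff)

lemma sum_mult_if_s_eq:
  "(\<Sum>k\<in>UNIV. f k * (if s k = c then 1 else 0)) = (if c < CARD('n) then f (idx c) else (0::'a::semiring_1))"
  "(\<Sum>k\<in>UNIV. (if s k = c then 1 else 0) * f k) = (if c < CARD('n) then f (idx c) else (0::'a::semiring_1))"
  by (subst sum_if_s_eq[symmetric]; rule sum.cong; auto)+

lemma jordan_block_mult_vec_nth:
  "(jordan_block s *v x) $ i = (if Suc (s i) < CARD('n) then x $ idx (Suc (s i)) else (0::'a::semiring_1))"
  by (simp add: jordan_block_def matrix_vector_mult_def sum_mult_if_s_eq)

lemma matpow_vec_jordan_nth:
  "matpow_vec (jordan_block s) k w $ i = (if s i + k < CARD('n) then w $ idx (s i + k) else (0::'a::semiring_1))"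
proof (induction k arbitrary: i)
  case (Suc k)
  show ?case by (simp add: matpow_vec_Suc jordan_block_mult_vec_nth Suc)
qed simp

lemma matpow_vec_jordan_card: "matpow_vec (jordan_block s) CARD('n) w = (0::'a::semiring_1^'n)"
  by (simp add: vec_eq_iff matpow_vec_jordan_nth)

lemma krylov_jordan_nth:
  "krylov s (jordan_block s) w $ i $ j = (if s i + s j < CARD('n) then w $ idx (s i + s j) else (0::'a::semiring_1))"
  by (simp add: krylov_def matpow_vec_jordan_nth)

lemma krylov_intertwines_transpose_jordan:
  fixes N :: "'a::semiring_1^'n^'n"
  assumes "matpow_vec N CARD('n) w = 0"
  shows "N ** krylov s N w = krylov s N w ** transpose (jordan_block s)"
proof -
  have "(N ** krylov s N w) $ i $ j = (krylov s N w ** transpose (jordan_block s)) $ i $ j" for i j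
  proof -
    have "(N ** krylov s N w) $ i $ j = matpow_vec N (Suc (s j)) w $ i"
      by (simp add: matrix_matrix_mult_def krylov_def matpow_vec_Suc matrix_vector_mult_def)
    moreover have "(krylov s N w ** transpose (jordan_block s)) $ i $ j
        = (if Suc (s j) < CARD('n) then matpow_vec N (Suc (s j)) w $ i else 0)"
      by (simp add: matrix_matrix_mult_def transpose_def jordan_block_def krylov_def sum_mult_if_s_eq)
    moreover have "Suc (s j) = CARD('n)" if "\<not> Suc (s j) < CARD('n)"
      using that s_less_card[of j] by linarith
    ultimately show ?thesis using assms by auto
  qed
  then show ?thesis by (simp add: vec_eq_iff)
qed

lemma invertible_krylov_jordan:
  fixes w :: "'a::field^'n"
  assumes "w $ idx (CARD('n) - 1) \<noteq> 0"
  shows "invertible (krylov s (jordan_block s) w)"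
proof -
  let ?n = "CARD('n)" and ?K = "krylov s (jordan_block s) w"
  have "x = 0" if Kx: "?K *v x = 0" for x
  proof (rule ccontr)
    assume "x \<noteq> 0"
    then have ex: "\<exists>m j. s j = m \<and> x $ j \<noteq> 0" by (auto simp: vec_eq_iff)
    define m where "m = (LEAST m. \<exists>j. s j = m \<and> x $ j \<noteq> 0)"
    obtain j0 where j0: "s j0 = m" "x $ j0 \<noteq> 0"
      using LeastI_ex[OF ex] unfolding m_def by blast
    have below: "x $ j = 0" if "s j < m" for j
      using not_less_Least[OF that[unfolded m_def]] by blast
    have "m < ?n" using j0(1) s_less_card by metis
    \<comment> \<open>?K vanishes below its antidiagonal, along which every entry is w $ idx (?n - 1).\<close>
    have "(?K *v x) $ idx (?n - 1 - m) = (\<Sum>j\<in>UNIV. if j = j0 then w $ idx (?n - 1) * x $ j0 else 0)"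
      unfolding matrix_vector_mult_def vec_lambda_beta
    proof (rule sum.cong[OF refl])
      fix j
      consider "s j < m" | "j = j0" | "m < s j" "j \<noteq> j0"
        using j0(1) inj_s by (metis injD linorder_neqE_nat)
      then show "?K $ idx (?n - 1 - m) $ j * x $ j = (if j = j0 then w $ idx (?n - 1) * x $ j0 else 0)"
      proof cases
        case 1
        then show ?thesis using below j0(1) by auto
      next
        case 2
        then show ?thesis using j0(1) \<open>m < ?n\<close> by (simp add: krylov_jordan_nth)
      next
        case 3
        then show ?thesis using \<open>m < ?n\<close> by (simp add: krylov_jordan_nth)
      qed
    qed
    then have "(?K *v x) $ idx (?n - 1 - m) \<noteq> 0" using assms j0 by simp
    then show False using Kx by simp
  qed
  then have "\<exists>B. B ** ?K = mat 1"
    by (simp add: matrix_left_invertible_ker)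
  then show ?thesis
    by (simp add: invertible_left_inverse)
qed

lemma commutator_transpose_jordan_tail_projection:
  "bracket (transpose (jordan_block s)) (tail_projection s p) $ i $ j
     = (if s i = p \<and> Suc (s j) = p then -1 else (0::complex))"
proof -
  have D: "tail_projection s p $ k $ l = (if k = l then (if p \<le> s l then 1 else 0) else (0::complex))" for k l
    by (simp add: tail_projection_def)
  have "(transpose (jordan_block s) ** tail_projection s p) $ i $ j
      = (if s i = Suc (s j) \<and> p \<le> s j then 1 else (0::complex))"
    by (simp add: matrix_matrix_mult_def transpose_def jordan_block_def D
        if_distrib[of "\<lambda>x. _ * x"] cong: if_cong)
  moreover have "(tail_projection s p ** transpose (jordan_block s)) $ i $ j
      = (if s i = Suc (s j) \<and> p \<le> s i then 1 else (0::complex))"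
    by (simp add: matrix_matrix_mult_def transpose_def jordan_block_def D
        if_distrib[of "\<lambda>x. x * _"] cong: if_cong)
  ultimately show ?thesis
    by (auto simp: bracket_def)
qed

lemma shift_projection_witness:
  fixes X T :: "complex^'n^'n"
  assumes T: "invertible T" and XT: "X ** T = T ** transpose (jordan_block s)"
    and Tv0: "T *v axis (idx p) 1 = v0" and p: "1 \<le> p" "p < CARD('n)"
  shows "\<exists>Y. semisimple_mat Y \<and> Y \<notin> gl_center \<and> bracket X Y \<in> trace_perp (lie_p v0)"
proof -
  let ?Z = "transpose (jordan_block s) :: complex^'n^'n" and ?D = "tail_projection s p :: complex^'n^'n"
  let ?F = "bracket ?Z ?D"
  define Y where "Y = T ** ?D ** matrix_inv T"
  have "bracket X Y = (X ** T) ** ?D ** matrix_inv T - T ** ?D ** (matrix_inv T ** X)"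
    by (simp add: bracket_def Y_def matrix_mul_assoc)
  also have "\<dots> = T ** ?F ** matrix_inv T"
    by (simp add: XT intertwiner_inverse[OF XT T] bracket_def matrix_mul_assoc
        matrix_diff_ldistrib matrix_diff_rdistrib)
  finally have bracket_XY: "bracket X Y = T ** ?F ** matrix_inv T" .
  have "semisimple_mat Y"
    unfolding semisimple_mat_def Y_def using T by (intro exI[of _ T] exI[of _ ?D]) (simp add: tail_projection_def)
  moreover have "Y \<notin> gl_center"
  proof
    assume "Y \<in> gl_center"
    then have "matrix_inv T ** (T ** ?F ** matrix_inv T) ** T = 0"
      by (simp add: gl_center_def bracket_XY[symmetric])
    then have "?F = 0"
      by (simp add: matrix_mul_assoc matrix_inv_left matrix_inv_cancel_right T)
    then have "?F $ idx p $ idx (p - 1) = 0" by simp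
    with p show False by (simp add: commutator_transpose_jordan_tail_projection)
  qed
  moreover have "bracket X Y \<in> trace_perp (lie_p v0)"
    unfolding bracket_XY using Tv0
    by (rule similar_single_row_in_trace_perp)
      (auto simp: commutator_transpose_jordan_tail_projection)
  ultimately show ?thesis by blast
qed

lemma noncyclic_eq_jordan_power_of_cyclic:
  fixes u :: "'a::semiring_1^'n"
  assumes "u \<noteq> 0" "u $ idx (CARD('n) - 1) = 0"
  obtains w p where "1 \<le> p" "p < CARD('n)" "w $ idx (CARD('n) - 1) \<noteq> 0"
    and "matpow_vec (jordan_block s) p w = u"
proof -
  let ?n = "CARD('n)"
  define M where "M = {k. k < ?n \<and> u $ idx k \<noteq> 0}"
  define m where "m = Max M"
  obtain i where "u $ i \<noteq> 0" using assms(1) by (auto simp: vec_eq_iff)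
  then have "s i \<in> M" by (simp add: M_def)
  then have "m \<in> M" unfolding m_def by (intro Max_in) (auto simp: M_def intro: exI[of _ "s i"])
  then have m: "m < ?n" "u $ idx m \<noteq> 0" by (auto simp: M_def)
  have above_m: "u $ idx k = 0" if "m < k" "k < ?n" for k
    using that Max_ge[of M k] unfolding M_def m_def by fastforce
  define p where "p = ?n - 1 - m"
  have "m \<noteq> ?n - 1" using m assms(2) by auto
  then have p: "1 \<le> p" "p < ?n" using m by (auto simp: p_def)
  define w :: "'a^'n" where "w = (\<chi> i. if p \<le> s i then u $ idx (s i - p) else 0)"
  show ?thesis
  proof
    show "1 \<le> p" "p < ?n" by (fact p)+
    show "w $ idx (?n - 1) \<noteq> 0" using p m by (simp add: w_def p_def)
    have "matpow_vec (jordan_block s) p w $ i = u $ i" for i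
    proof (cases "s i + p < ?n")
      case False
      then have "m < s i" using m by (simp add: p_def)
      then show ?thesis using False above_m[of "s i"] by (simp add: matpow_vec_jordan_nth)
    qed (simp add: matpow_vec_jordan_nth w_def)
    then show "matpow_vec (jordan_block s) p w = u" by (simp add: vec_eq_iff)
  qed
qed

end

locale jordan_form = index_order s for s :: "'n::finite \<Rightarrow> nat" +
  fixes S X :: "complex^'n^'n"
  assumes invertible_S: "invertible S"
    and X_eq: "X = S ** jordan_block s ** matrix_inv S"
begin

lemma krylov_X: "krylov s X w = S ** krylov s (jordan_block s) (matrix_inv S *v w)"
  by (simp add: X_eq krylov_conj matrix_inv_left matrix_inv_right invertible_S)

lemma X_intertwines_krylov: "X ** krylov s X w = krylov s X w ** transpose (jordan_block s)"
proof (rule krylov_intertwines_transpose_jordan)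
  have "matpow_vec X CARD('n) (S *v (matrix_inv S *v w)) = S *v matpow_vec (jordan_block s) CARD('n) (matrix_inv S *v w)"
    unfolding X_eq by (rule matpow_vec_similar) (simp add: matrix_inv_left invertible_S)
  then show "matpow_vec X CARD('n) w = 0"
    by (simp add: matrix_vector_mul_assoc matrix_inv_right invertible_S matpow_vec_jordan_card)
qed

lemma noncyclic_adapted_basis:
  assumes "v0 \<noteq> 0" "(matrix_inv S *v v0) $ idx (CARD('n) - 1) = 0"
  obtains T p where "invertible T" "X ** T = T ** transpose (jordan_block s)"
    and "T *v axis (idx p) 1 = v0" "1 \<le> p" "p < CARD('n)"
proof -
  have "matrix_inv S *v v0 \<noteq> 0"
    using assms(1) by (metis matrix_inv_right invertible_S matrix_vector_mul_assoc matrix_vector_mul_lid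
        matrix_vector_mult_0_right)
  then obtain w p where p: "1 \<le> p" "p < CARD('n)" and w: "w $ idx (CARD('n) - 1) \<noteq> 0"
    and u: "matpow_vec (jordan_block s) p w = matrix_inv S *v v0"
    using noncyclic_eq_jordan_power_of_cyclic assms(2) by blast
  define T where "T = krylov s X (S *v w)"
  have T_eq: "T = S ** krylov s (jordan_block s) w"
    by (simp add: T_def krylov_X matrix_vector_mul_assoc matrix_inv_left invertible_S)
  show ?thesis
  proof
    show "invertible T"
      unfolding T_eq by (intro invertible_mult invertible_S invertible_krylov_jordan w)
    show "X ** T = T ** transpose (jordan_block s)"
      unfolding T_def by (rule X_intertwines_krylov)
    have "T *v axis (idx p) 1 = S *v matpow_vec (jordan_block s) p w"
      by (simp add: T_eq matrix_vector_mul_assoc[symmetric] krylov_mult_axis p)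
    then show "T *v axis (idx p) 1 = v0"
      by (simp add: u matrix_vector_mul_assoc matrix_inv_right invertible_S)
  qed (fact p)+
qed

lemma orbit_stab_eq_cyclic:
  assumes cyclic: "invertible (krylov s X v0)"
  shows "orbit (stab v0) X = orbit GL X \<inter> {N. invertible (krylov s N v0)}"
proof
  show "orbit (stab v0) X \<subseteq> orbit GL X \<inter> {N. invertible (krylov s N v0)}"
  proof
    fix N assume "N \<in> orbit (stab v0) X"
    then obtain h where h: "invertible h" "h *v v0 = v0" and N: "N = h ** X ** matrix_inv h"
      by (auto simp: orbit_def stab_def conj_act_def)
    have "matrix_inv h *v v0 = v0"
      by (metis h matrix_inv_left matrix_vector_mul_assoc matrix_vector_mul_lid)
    then have "krylov s N v0 = h ** krylov s X v0"
      by (simp add: N krylov_conj matrix_inv_left matrix_inv_right h(1))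
    then show "N \<in> orbit GL X \<inter> {N. invertible (krylov s N v0)}"
      using N h(1) cyclic orbit_GL_memI[OF matrix_inv_right matrix_inv_left] invertible_mult by auto
  qed
  show "orbit GL X \<inter> {N. invertible (krylov s N v0)} \<subseteq> orbit (stab v0) X"
  proof
    fix N assume N: "N \<in> orbit GL X \<inter> {N. invertible (krylov s N v0)}"
    then obtain g where g: "invertible g" and N_eq: "N = g ** X ** matrix_inv g"
      by (auto simp: orbit_def GL_def conj_act_def)
    define w where "w = matrix_inv g *v v0"
    have "krylov s N v0 = g ** krylov s X w"
      by (simp add: N_eq w_def krylov_conj matrix_inv_left matrix_inv_right g)
    then have "krylov s X w = matrix_inv g ** krylov s N v0"
      by (simp add: matrix_mul_assoc matrix_inv_left g)
    then have Kw: "invertible (krylov s X w)"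
      using N g by (simp add: invertible_mult invertible_matrix_inv)
    \<comment> \<open>C commutes with X and moves v0 to w, so g C lies in the stabiliser and conjugates X to N.\<close>
    define C where "C = krylov s X w ** matrix_inv (krylov s X v0)"
    have C: "invertible C"
      unfolding C_def using Kw cyclic by (simp add: invertible_mult invertible_matrix_inv)
    have CX: "C ** X = X ** C"
      unfolding C_def by (rule intertwiner_quotient_commutes[OF X_intertwines_krylov X_intertwines_krylov cyclic])
    have axis_0: "krylov s M u *v axis (idx 0) 1 = u" for M :: "complex^'n^'n" and u
      by (simp add: krylov_mult_axis)
    have "matrix_inv (krylov s X v0) *v v0 = axis (idx 0) 1"
      by (metis axis_0 cyclic matrix_inv_left matrix_vector_mul_assoc matrix_vector_mul_lid)
    then have "(g ** C) *v v0 = v0"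
      unfolding C_def w_def
      by (simp add: matrix_vector_mul_assoc[symmetric] axis_0)
        (simp add: matrix_vector_mul_assoc matrix_inv_right g)
    moreover have "conj_act (g ** C) X = N"
    proof -
      have "conj_act (g ** C) X = g ** (C ** X) ** matrix_inv C ** matrix_inv g"
        by (simp add: conj_act_def matrix_inv_mult g C matrix_mul_assoc)
      also have "\<dots> = N"
        by (simp add: CX N_eq matrix_mul_assoc[symmetric] matrix_inv_right C)
      finally show ?thesis .
    qed
    ultimately show "N \<in> orbit (stab v0) X"
      unfolding orbit_def stab_def using g C invertible_mult by blast
  qed
qed

lemma conj_in_orbit_cyclic:
  assumes GG': "G ** G' = mat 1" "G' ** G = mat 1"
    and cyclic: "(matrix_inv S *v (G' *v v0)) $ idx (CARD('n) - 1) \<noteq> 0"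
  shows "G ** X ** G' \<in> orbit GL X \<inter> {N. invertible (krylov s N v0)}"
proof -
  have "krylov s (G ** X ** G') v0 = G ** S ** krylov s (jordan_block s) (matrix_inv S *v (G' *v v0))"
    by (simp add: krylov_conj[OF GG'] krylov_X matrix_mul_assoc)
  moreover have "invertible G" using GG' unfolding invertible_def by blast
  ultimately have "invertible (krylov s (G ** X ** G') v0)"
    by (simp add: invertible_mult invertible_S invertible_krylov_jordan[OF cyclic])
  then show ?thesis using orbit_GL_memI[OF GG'] by blast
qed

lemma orbit_GL_subset_closure_cyclic:
  assumes "v0 \<noteq> 0"
  shows "orbit GL X \<subseteq> closure (orbit GL X \<inter> {N. invertible (krylov s N v0)})"
proof
  fix N assume "N \<in> orbit GL X"
  then obtain g where g: "invertible g" and N: "N = g ** X ** matrix_inv g"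
    by (auto simp: orbit_def GL_def conj_act_def)
  define u where "u = matrix_inv S *v (matrix_inv g *v v0)"
  have "S *v u = matrix_inv g *v v0"
    by (simp add: u_def matrix_vector_mul_assoc matrix_mul_assoc matrix_inv_right invertible_S)
  then have "g *v (S *v u) = v0"
    by (simp add: matrix_vector_mul_assoc matrix_inv_right g)
  then have "u \<noteq> 0" using assms by auto
  then obtain H H' where HH': "\<And>k. H k ** H' k = mat 1" "\<And>k. H' k ** H k = mat 1"
    and lim: "H \<longlonglongrightarrow> mat 1" "H' \<longlonglongrightarrow> mat 1"
    and cyc: "\<And>k. (H k *v u) $ idx (CARD('n) - 1) \<noteq> 0"
    using nonzero_coordinate_near_identity[of u "idx (CARD('n) - 1)"] by blast
  define G where "G k = (g ** S) ** (H' k ** matrix_inv S)" for k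
  define G' where "G' k = (S ** H k) ** (matrix_inv S ** matrix_inv g)" for k
  have inv: "g ** S ** (matrix_inv S ** matrix_inv g) = mat 1" "S ** H k ** (H' k ** matrix_inv S) = mat 1"
    "H' k ** matrix_inv S ** (S ** H k) = mat 1" "matrix_inv S ** matrix_inv g ** (g ** S) = mat 1" for k
    by (intro matrix_mul_inverse_pair HH' matrix_inv_left matrix_inv_right g invertible_S)+
  have GG': "G k ** G' k = mat 1" "G' k ** G k = mat 1" for k
    unfolding G_def G'_def by (intro matrix_mul_inverse_pair inv)+
  have "G k ** X ** G' k \<in> orbit GL X \<inter> {N. invertible (krylov s N v0)}" for k
  proof (rule conj_in_orbit_cyclic[OF GG'])
    have "matrix_inv S *v (G' k *v v0) = H k *v u"
      by (simp add: G'_def u_def matrix_vector_mul_assoc matrix_mul_assoc matrix_inv_left invertible_S)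
    then show "(matrix_inv S *v (G' k *v v0)) $ idx (CARD('n) - 1) \<noteq> 0"
      using cyc by simp
  qed
  moreover have "(\<lambda>k. G k ** X ** G' k) \<longlonglongrightarrow> N"
  proof -
    have "G k ** X ** G' k = (g ** S) ** H' k ** jordan_block s ** H k ** (matrix_inv S ** matrix_inv g)" for k
      by (simp add: G_def G'_def X_eq matrix_mul_assoc matrix_inv_cancel_right invertible_S)
    moreover have "N = (g ** S) ** mat 1 ** jordan_block s ** mat 1 ** (matrix_inv S ** matrix_inv g)"
      by (simp add: N X_eq matrix_mul_assoc)
    ultimately show ?thesis
      by (simp only:) (intro tendsto_matrix_mult tendsto_const lim)
  qed
  ultimately show "N \<in> closure (orbit GL X \<inter> {N. invertible (krylov s N v0)})"
    unfolding closure_sequential by (intro exI[of _ "\<lambda>k. G k ** X ** G' k"]) blast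
qed

end

theorem mainTheorem11:
  fixes v0 :: "complex^'n::finite" and X :: "complex^'n^'n"
  assumes "v0 \<noteq> 0"
    and "regular_nilpotent X"
    and "\<not> (openin (top_of_set (orbit GL X)) (orbit (stab v0) X)
             \<and> orbit GL X \<subseteq> closure (orbit (stab v0) X))"
  shows "\<exists>Y. semisimple_mat Y \<and> Y \<notin> gl_center \<and> bracket X Y \<in> trace_perp (lie_p v0)"
proof -
  obtain S s where S: "invertible S" and "bij_betw s (UNIV::'n set) {0..<CARD('n)}"
    and J: "matrix_inv S ** X ** S = jordan_block s"
    using assms(2) unfolding regular_nilpotent_def jordan_block_def by blast
  then interpret jordan_form s S X
    by unfold_locales (simp_all add: J[symmetric] matrix_mul_assoc matrix_inv_right matrix_inv_cancel_right)
  show ?thesis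
  proof (cases "(matrix_inv S *v v0) $ idx (CARD('n) - 1) = 0")
    case True
    with assms(1) obtain T p where "invertible T" "X ** T = T ** transpose (jordan_block s)"
      "T *v axis (idx p) 1 = v0" "1 \<le> p" "p < CARD('n)"
      by (rule noncyclic_adapted_basis)
    then show ?thesis by (rule shift_projection_witness)
  next
    case False
    then have "invertible (krylov s X v0)"
      by (simp add: krylov_X invertible_mult invertible_S invertible_krylov_jordan)
    then have "orbit (stab v0) X = orbit GL X \<inter> {N. invertible (krylov s N v0)}"
      by (rule orbit_stab_eq_cyclic)
    moreover have "openin (top_of_set (orbit GL X)) (orbit GL X \<inter> {N. invertible (krylov s N v0)})"
      by (intro openin_open_Int open_krylov_invertible)
    ultimately show ?thesis
      using assms orbit_GL_subset_closure_cyclic by auto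
  qed
qed

end
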